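(* There exist a temporal graph $\mathcal{G}=(X,A)\in\mathbb{T}_{n,T,p}$ (with $T=2$, no node or edge attributes beyond edge presence) whose aggregated graph consists of two connected components, and nodes $u,v,w$ with $u,w$ in the same component, $(u,w)$ an edge at time $T$, and $v$ in the other component, such that for every node-equivariant temporal node representation $f:\mathbb{T}_{n,T,p}\to\mathbb{R}^{n\times d}$ (in particular every one in the time-and-graph or time-then-graph families built from equivariant components) one has $f(\mathcal{G})_u=f(\mathcal{G})_v$, and hence for every link-scoring function $s:\mathbb{R}^d\times\mathbb{R}^d\to\mathbb{R}$, $s(f(\mathcal{G})_u,f(\mathcal{G})_w)=s(f(\mathcal{G})_v,f(\mathcal{G})_w)$. Consequently no link predictor based on equivariant temporal node representations can correctly predict temporal links on $\mathcal{G}$.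
   Context: $\mathbb{T}_{n,T,p}=\mathbb{R}^{n\times T\times p}\times\mathbb{R}^{n\times n\times T\times p}$ is the set of temporal graphs $(X,A)$ on node set $V=\{1,\dots,n\}$ over $T$ time steps with node attributes $X_{i,t}$ and edge attributes $A_{i,j,t}$ (an edge $(i,j)$ is present at time $t$ iff $A_{i,j,t}\neq0$). The aggregated graph has an edge $\{i,j\}$ iff $A_{i,j,t}\ne0$ for some $t$. A permutation $\pi$ of $V$ acts by $(\pi X)_{\pi(i),t}=X_{i,t}$, $(\pi A)_{\pi(i),\pi(j),t}=A_{i,j,t}$, and on $Z\in\mathbb{R}^{n\times d}$ by $(\pi Z)_{\pi(i)}=Z_i$. A temporal node representation $f:\mathbb{T}_{n,T,p}\to\mathbb{R}^{n\times d}$ is node-equivariant if $f(\pi\mathcal{G})=\pi f(\mathcal{G})$ for all $\pi$ and $\mathcal{G}$. A link between $a,b$ is predicted by applying $s$ to $(f(\mathcal{G})_a,f(\mathcal{G})_b)$. *)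

theory Defs
  imports Complex_Main "HOL-Combinatorics.Permutations"
begin

text \<open>Temporal graphs (X, A) with 0-based indices: nodes 0..<n, time steps 0..<T,
  feature coordinates 0..<p.  X i t k is the k-th coordinate of X_{i,t};
  A i j t k is the k-th coordinate of A_{i,j,t}.\<close>

type_synonym tgraph = "(nat \<Rightarrow> nat \<Rightarrow> nat \<Rightarrow> real) \<times> (nat \<Rightarrow> nat \<Rightarrow> nat \<Rightarrow> nat \<Rightarrow> real)"

definition in_TG :: "nat \<Rightarrow> nat \<Rightarrow> nat \<Rightarrow> tgraph \<Rightarrow> bool" where
  "in_TG n T p G \<longleftrightarrow>
     (\<forall>i t k. fst G i t k \<noteq> 0 \<longrightarrow> i < n \<and> t < T \<and> k < p) \<and>
     (\<forall>i j t k. snd G i j t k \<noteq> 0 \<longrightarrow> i < n \<and> j < n \<and> t < T \<and> k < p)"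

definition in_mat :: "nat \<Rightarrow> nat \<Rightarrow> (nat \<Rightarrow> nat \<Rightarrow> real) \<Rightarrow> bool" where
  "in_mat n d Z \<longleftrightarrow> (\<forall>i k. Z i k \<noteq> 0 \<longrightarrow> i < n \<and> k < d)"

text \<open>Action of a permutation pi of the node set: (pi X)_{pi i} = X_i etc.\<close>
definition perm_TG :: "(nat \<Rightarrow> nat) \<Rightarrow> tgraph \<Rightarrow> tgraph" where
  "perm_TG \<pi> G = ((\<lambda>i t k. fst G (inv \<pi> i) t k),
                   (\<lambda>i j t k. snd G (inv \<pi> i) (inv \<pi> j) t k))"

definition perm_mat :: "(nat \<Rightarrow> nat) \<Rightarrow> (nat \<Rightarrow> nat \<Rightarrow> real) \<Rightarrow> (nat \<Rightarrow> nat \<Rightarrow> real)" where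
  "perm_mat \<pi> Z = (\<lambda>i k. Z (inv \<pi> i) k)"

definition node_equivariant ::
  "nat \<Rightarrow> nat \<Rightarrow> nat \<Rightarrow> nat \<Rightarrow> (tgraph \<Rightarrow> nat \<Rightarrow> nat \<Rightarrow> real) \<Rightarrow> bool" where
  "node_equivariant n T p d f \<longleftrightarrow>
     (\<forall>G. in_TG n T p G \<longrightarrow> in_mat n d (f G)) \<and>
     (\<forall>\<pi> G. \<pi> permutes {..<n} \<and> in_TG n T p G \<longrightarrow> f (perm_TG \<pi> G) = perm_mat \<pi> (f G))"

definition aggr_edge :: "nat \<Rightarrow> nat \<Rightarrow> nat \<Rightarrow> (nat \<Rightarrow> nat \<Rightarrow> nat \<Rightarrow> nat \<Rightarrow> real) \<Rightarrow> nat \<Rightarrow> nat \<Rightarrow> bool" where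
  "aggr_edge n T p A i j \<longleftrightarrow> i < n \<and> j < n \<and>
     (\<exists>t<T. \<exists>k<p. A i j t k \<noteq> 0 \<or> A j i t k \<noteq> 0)"

definition same_comp :: "nat \<Rightarrow> nat \<Rightarrow> nat \<Rightarrow> (nat \<Rightarrow> nat \<Rightarrow> nat \<Rightarrow> nat \<Rightarrow> real) \<Rightarrow> nat rel" where
  "same_comp n T p A = {(i, j). i < n \<and> j < n \<and> (aggr_edge n T p A)\<^sup>*\<^sup>* i j}"

definition num_components :: "nat \<Rightarrow> nat \<Rightarrow> nat \<Rightarrow> (nat \<Rightarrow> nat \<Rightarrow> nat \<Rightarrow> nat \<Rightarrow> real) \<Rightarrow> nat" where
  "num_components n T p A = card ({..<n} // same_comp n T p A)"

end

theory Submission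
  imports Defs
begin

text \<open>A node-equivariant representation cannot separate two nodes that are exchanged by an
  automorphism of the input graph: if \<open>\<pi> G = G\<close> then \<open>f G = \<pi> (f G)\<close>, i.e. \<open>f G\<close> is constant
  on the orbits of \<open>\<pi>\<close>.  The counterexample is the graph with the two disjoint edges
  \<open>{0,1}\<close> and \<open>{2,3}\<close> at the last time step; the permutation exchanging \<open>0 \<leftrightarrow> 2\<close> and
  \<open>1 \<leftrightarrow> 3\<close> preserves it while mapping the endpoint \<open>0\<close> of the edge \<open>{0,1}\<close> to the node
  \<open>2\<close> in the other component.\<close>

lemma perm_mat_fixed_constant_on_orbit:
  assumes "bij \<pi>" and "perm_mat \<pi> Z = Z"
  shows "Z (\<pi> i) = Z i"
proof -
  have "Z (\<pi> i) = perm_mat \<pi> Z (\<pi> i)" using assms(2) by simp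
  also have "\<dots> = Z i" using bij_is_inj[OF assms(1)] by (simp add: perm_mat_def)
  finally show ?thesis .
qed

lemma node_equivariant_automorphism_invariant:
  assumes "node_equivariant n T p d f" and "\<pi> permutes {..<n}"
    and "in_TG n T p G" and "perm_TG \<pi> G = G"
  shows "f G (\<pi> i) = f G i"
proof (rule perm_mat_fixed_constant_on_orbit)
  show "bij \<pi>" using assms(2) by (rule permutes_bij)
  show "perm_mat \<pi> (f G) = f G"
    using assms unfolding node_equivariant_def by metis
qed

definition two_edges :: "nat \<Rightarrow> nat \<Rightarrow> nat \<Rightarrow> nat \<Rightarrow> real" where
  "two_edges = (\<lambda>i j t k. if t = 1 \<and> k = 0 \<and> (i, j) \<in> {(0,1), (1,0), (2,3), (3,2)} then 1 else 0)"

definition swap_components :: "nat \<Rightarrow> nat" where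
  "swap_components i = (if i < 4 then (i + 2) mod 4 else i)"

lemma nat_cases_below_4: obtains "(i::nat) = 0" | "i = 1" | "i = 2" | "i = 3" | "4 \<le> i"
  by linarith

lemma swap_components_involution: "swap_components (swap_components i) = i"
  by (cases i rule: nat_cases_below_4) (simp_all add: swap_components_def)

lemma swap_components_permutes: "swap_components permutes {..<4}"
  unfolding permutes_def
  by (metis swap_components_def swap_components_involution lessThan_iff)

lemma inv_swap_components: "inv swap_components = swap_components"
  by (rule inv_equality) (rule swap_components_involution)+

lemma two_edges_swap_components:
  "two_edges (swap_components i) (swap_components j) t k = two_edges i j t k"
  by (cases i rule: nat_cases_below_4; cases j rule: nat_cases_below_4)
    (simp_all add: two_edges_def swap_components_def)

lemma perm_TG_swap_components:
  "perm_TG swap_components (\<lambda>i t k. 0, two_edges) = (\<lambda>i t k. 0, two_edges)"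
  unfolding perm_TG_def inv_swap_components by (simp add: two_edges_swap_components fun_eq_iff)

lemma aggr_edge_two_edges:
  "aggr_edge 4 2 1 two_edges i j \<longleftrightarrow> (i, j) \<in> {(0,1), (1,0), (2,3), (3,2)}"
  unfolding aggr_edge_def two_edges_def by auto

lemma aggr_edge_two_edges_same_side:
  "aggr_edge 4 2 1 two_edges i j \<Longrightarrow> i < 4 \<and> j < 4 \<and> (i < 2 \<longleftrightarrow> j < 2)"
  unfolding aggr_edge_two_edges by auto

lemma reachable_two_edges:
  "(aggr_edge 4 2 1 two_edges)\<^sup>*\<^sup>* i j \<longleftrightarrow> i = j \<or> (i < 4 \<and> j < 4 \<and> (i < 2 \<longleftrightarrow> j < 2))"
proof
  assume "(aggr_edge 4 2 1 two_edges)\<^sup>*\<^sup>* i j"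
  then show "i = j \<or> (i < 4 \<and> j < 4 \<and> (i < 2 \<longleftrightarrow> j < 2))"
  proof (induction rule: rtranclp_induct)
    case (step y z)
    then show ?case using aggr_edge_two_edges_same_side[OF step.hyps(2)] by auto
  qed simp
next
  assume "i = j \<or> (i < 4 \<and> j < 4 \<and> (i < 2 \<longleftrightarrow> j < 2))"
  then have "i = j \<or> aggr_edge 4 2 1 two_edges i j"
    unfolding aggr_edge_two_edges
    by (cases i rule: nat_cases_below_4; cases j rule: nat_cases_below_4) auto
  then show "(aggr_edge 4 2 1 two_edges)\<^sup>*\<^sup>* i j" by auto
qed

lemma same_comp_two_edges:
  "same_comp 4 2 1 two_edges = {(i, j). i < 4 \<and> j < 4 \<and> (i < 2 \<longleftrightarrow> j < 2)}"
  unfolding same_comp_def reachable_two_edges by auto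

lemma components_two_edges: "{..<4} // same_comp 4 2 1 two_edges = {{0, 1}, {2, 3}}"
proof -
  have "same_comp 4 2 1 two_edges `` {i} = (if i < 2 then {0, 1} else {2, 3})" if "i < 4" for i
    using that unfolding same_comp_two_edges by auto
  moreover have "{..<4::nat} = {0, 1, 2, 3}" by auto
  ultimately show ?thesis unfolding quotient_def by auto
qed

lemma num_components_two_edges: "num_components 4 2 1 two_edges = 2"
  unfolding num_components_def components_two_edges by (simp add: doubleton_eq_iff)

theorem theorem2:
  shows "\<exists>n X A u v w.
     in_TG n 2 1 (X, A) \<and>
     (\<forall>i t k. X i t k = 0) \<and>
     (\<forall>i j t k. A i j t k \<in> {0, 1}) \<and>
     num_components n 2 1 A = 2 \<and>
     u < n \<and> v < n \<and> w < n \<and>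
     (u, w) \<in> same_comp n 2 1 A \<and>
     A u w 1 0 \<noteq> 0 \<and>
     (u, v) \<notin> same_comp n 2 1 A \<and>
     (\<forall>d f. node_equivariant n 2 1 d f \<longrightarrow>
        f (X, A) u = f (X, A) v \<and>
        (\<forall>s :: (nat \<Rightarrow> real) \<Rightarrow> (nat \<Rightarrow> real) \<Rightarrow> real.
            s (f (X, A) u) (f (X, A) w) = s (f (X, A) v) (f (X, A) w)))"
proof (intro exI conjI allI impI)
  let ?X = "\<lambda>(i::nat) (t::nat) (k::nat). 0::real"
  show G_in_TG: "in_TG 4 2 1 (?X, two_edges)"
    unfolding in_TG_def two_edges_def by auto
  show "?X i t k = 0" for i t k by simp
  show "two_edges i j t k \<in> {0, 1}" for i j t k by (simp add: two_edges_def)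
  show "num_components 4 2 1 two_edges = 2" by (rule num_components_two_edges)
  show "(0::nat) < 4" "(2::nat) < 4" "(1::nat) < 4" by simp_all
  show "(0, 1) \<in> same_comp 4 2 1 two_edges" "(0, 2) \<notin> same_comp 4 2 1 two_edges"
    unfolding same_comp_two_edges by simp_all
  show "two_edges 0 1 1 0 \<noteq> 0" by (simp add: two_edges_def)
  fix d f assume "node_equivariant 4 2 1 d f"
  from node_equivariant_automorphism_invariant
      [OF this swap_components_permutes G_in_TG perm_TG_swap_components]
  have "f (?X, two_edges) (swap_components 0) = f (?X, two_edges) 0" .
  moreover have "swap_components 0 = 2" by (simp add: swap_components_def)
  ultimately show same_repr: "f (?X, two_edges) 0 = f (?X, two_edges) 2" by simp
  show "s (f (?X, two_edges) 0) (f (?X, two_edges) 1) = s (f (?X, two_edges) 2) (f (?X, two_edges) 1)"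
    for s :: "(nat \<Rightarrow> real) \<Rightarrow> (nat \<Rightarrow> real) \<Rightarrow> real"
    by (simp only: same_repr)
qed

end
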